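(* Let $N\ge 0$, $k\ge1$ be integers and $f:\{0,\dots,N\}^k\to\{\mathbf{true},\mathbf{false}\}$ a feasibility function, and run $\textsc{ParetoEnumerate}(N,k,f)$ (with arbitrary choices of the picked element in each iteration). Once some evaluation of $f$ during the run has returned $\mathbf{true}$ at a point $\vec x$, the algorithm never afterwards evaluates $f$ at any point $\vec y$ with $\vec x\le_k\vec y$.
   Context: For $\vec x,\vec x'\in\{0,\dots,N\}^k$, $\vec x\le_k\vec x'$ iff $x_i\le x'_i$ for all $i$; $\vec x$ is smaller than $\vec x'$ (and $\vec x'$ greater than $\vec x$) if $\vec x\le_k\vec x'$ and $\vec x\neq\vec x'$. A feasibility function is a monotone $f:\{0,\dots,N\}^k\to\{\mathbf{true},\mathbf{false}\}$: if $f(\vec x)=\mathbf{true}$ then $f(\vec x')=\mathbf{true}$ for all $\vec x'$ greater than $\vec x$. Procedure $\textsc{SearchParetoPoint}(\vec x,k,f)$: for $i=1,\dots,k$: set $\mathit{max}:=x_i+1$, $\mathit{min}:=0$; while $\mathit{max}-\mathit{min}>1$: $\mathit{mid}:=\mathit{min}+\lfloor(\mathit{max}-\mathit{min}-1)/2\rfloor$, $x_i:=\mathit{mid}$, and if $f(\vec x)=\mathbf{true}$ then $\mathit{max}:=\mathit{mid}+1$ else $\mathit{min}:=\mathit{mid}+1$; then $x_i:=\mathit{min}$. Return $\vec x$. Procedure $\textsc{ParetoEnumerate}(N,k,f)$: initialize $S:=\{(N,\dots,N)\}$ and $P:=\emptyset$. Main loop: while $S\neq\emptyset$: pick (without removing)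 some $\vec x\in S$; if $f(\vec x)=\mathbf{true}$, then set $\vec x:=\textsc{SearchParetoPoint}(\vec x,k,f)$, set $P:=P\cup\{\vec x\}$, set $S':=\emptyset$, and for each $\vec y\in S$: if not $\vec x\le_k\vec y$, add $\vec y$ to $S'$; otherwise, for each $i\in\{1,\dots,k\}$ with $x_i>0$, add $(y_1,\dots,y_{i-1},x_i-1,y_{i+1},\dots,y_k)$ to $S'$; then set $S$ to the set of elements of $S'$ that are not smaller than any other element of $S'$. Otherwise (if $f(\vec x)=\mathbf{false}$), set $S:=S\setminus\{\vec x\}$. When the loop ends, return $P$. The evaluations of $f$ made during the run are exactly the test $f(\vec x)$ on the picked element in each main-loop iteration and the tests inside $\textsc{SearchParetoPoint}$. *)

theory Defs
  imports Main
begin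

text \<open>Points of \{0..N\}^k are represented as lists of naturals of length k
  (coordinate i of the paper is list index i-1).\<close>

definition grid :: "nat \<Rightarrow> nat \<Rightarrow> nat list set" where
  "grid N k = {x. length x = k \<and> (\<forall>i<k. x ! i \<le> N)}"

definition leqk :: "nat list \<Rightarrow> nat list \<Rightarrow> bool" where
  "leqk x y \<longleftrightarrow> length x = length y \<and> (\<forall>i<length x. x ! i \<le> y ! i)"

definition smallerk :: "nat list \<Rightarrow> nat list \<Rightarrow> bool" where
  "smallerk x y \<longleftrightarrow> leqk x y \<and> x \<noteq> y"

definition feasible :: "nat \<Rightarrow> nat \<Rightarrow> (nat list \<Rightarrow> bool) \<Rightarrow> bool" where
  "feasible N k f \<longleftrightarrow> (\<forall>x\<in>grid N k. \<forall>y\<in>grid N k. f x \<longrightarrow> smallerk x y \<longrightarrow> f y)"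

text \<open>Inner binary-search loop of SearchParetoPoint on coordinate i, starting
  from min = lo, max = hi. Returns the final min and the list of evaluations
  (point, result) performed, in order.\<close>
function bsearch :: "(nat list \<Rightarrow> bool) \<Rightarrow> nat list \<Rightarrow> nat \<Rightarrow> nat \<Rightarrow> nat
    \<Rightarrow> nat \<times> (nat list \<times> bool) list" where
  "bsearch f x i lo hi =
     (if hi - lo > 1 then
        (let mid = lo + (hi - lo - 1) div 2;
             x' = x[i := mid];
             b = f x';
             (r, tr) = (if b then bsearch f x' i lo (mid + 1) else bsearch f x' i (mid + 1) hi)
         in (r, (x', b) # tr))
      else (lo, []))"
  by pat_completeness auto
termination
  by (relation "measure (\<lambda>(f, x, i, lo, hi). hi - lo)") auto

fun spp_aux :: "(nat list \<Rightarrow> bool) \<Rightarrow> nat list \<Rightarrow> nat list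
    \<Rightarrow> nat list \<times> (nat list \<times> bool) list" where
  "spp_aux f x [] = (x, [])"
| "spp_aux f x (i # is) =
     (let (m, tr) = bsearch f x i 0 (x ! i + 1);
          (r, tr') = spp_aux f (x[i := m]) is
      in (r, tr @ tr'))"

definition search_pareto_point :: "(nat list \<Rightarrow> bool) \<Rightarrow> nat list
    \<Rightarrow> nat list \<times> (nat list \<times> bool) list" where
  "search_pareto_point f x = spp_aux f x [0..<length x]"

definition split_set :: "nat \<Rightarrow> nat list \<Rightarrow> nat list set \<Rightarrow> nat list set" where
  "split_set k x S =
     {y \<in> S. \<not> leqk x y} \<union>
     {y[i := x ! i - 1] | y i. y \<in> S \<and> leqk x y \<and> i < k \<and> x ! i > 0}"

definition maximal_elems :: "nat list set \<Rightarrow> nat list set" where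
  "maximal_elems S' = {y \<in> S'. \<not> (\<exists>z\<in>S'. smallerk y z)}"

text \<open>States of ParetoEnumerate: (S, P, trace of all evaluations of f so far).
  One step = one iteration of the main loop, with an arbitrary picked element.\<close>
type_synonym pe_state = "nat list set \<times> nat list set \<times> (nat list \<times> bool) list"

inductive pe_step :: "nat \<Rightarrow> nat \<Rightarrow> (nat list \<Rightarrow> bool) \<Rightarrow> pe_state \<Rightarrow> pe_state \<Rightarrow> bool"
  for N k f where
  feasible_pick:
    "\<lbrakk> x \<in> S; f x; search_pareto_point f x = (x', tr1) \<rbrakk> \<Longrightarrow>
     pe_step N k f (S, P, tr)
       (maximal_elems (split_set k x' S), insert x' P, tr @ [(x, True)] @ tr1)"
| infeasible_pick:
    "\<lbrakk> x \<in> S; \<not> f x \<rbrakk> \<Longrightarrow>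
     pe_step N k f (S, P, tr) (S - {x}, P, tr @ [(x, False)])"

definition pe_init :: "nat \<Rightarrow> nat \<Rightarrow> pe_state" where
  "pe_init N k = ({replicate k N}, {}, [])"

end

theory Submission
  imports Defs
begin

text \<open>Every point at which f evaluates to true lies above a Pareto point already in P,
  while no candidate in S lies above a point of P, and every point evaluated later is a
  candidate or, inside SearchParetoPoint, lies below the picked candidate. Within
  SearchParetoPoint the binary searches only lower coordinates: after a true evaluation at
  a point, all later evaluations are strictly below the current point, which lies below it;
  and the returned Pareto point lies below every point where the search found f true.\<close>

lemma leqk_refl: "leqk x x"
  by (simp add: leqk_def)

lemma leqk_trans: "leqk x y \<Longrightarrow> leqk y z \<Longrightarrow> leqk x z"
  unfolding leqk_def by (metis order_trans)

lemma leqk_antisym: "leqk x y \<Longrightarrow> leqk y x \<Longrightarrow> x = y"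
  unfolding leqk_def by (metis le_antisym nth_equalityI)

lemma nth_less_imp_not_leqk: "j < length x \<Longrightarrow> y ! j < x ! j \<Longrightarrow> \<not> leqk x y"
  unfolding leqk_def by (metis not_le)

lemma list_update_leqk: "v \<le> x ! i \<Longrightarrow> leqk (x[i := v]) x"
  unfolding leqk_def by (metis length_list_update nth_list_update nth_list_update_neq order_refl)

lemma leqk_list_update_mono: "u \<le> v \<Longrightarrow> leqk (x[i := u]) (x[i := v])"
  unfolding leqk_def by (metis length_list_update nth_list_update nth_list_update_neq order_refl)

lemma list_update_smallerk: "i < length x \<Longrightarrow> v < x ! i \<Longrightarrow> smallerk (x[i := v]) x"
  unfolding smallerk_def using list_update_leqk[of v x i] by (metis less_imp_le nat_neq_iff nth_list_update_eq)

lemma smallerk_leqk_trans: "smallerk x y \<Longrightarrow> leqk y z \<Longrightarrow> smallerk x z"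
  unfolding smallerk_def using leqk_trans leqk_antisym by blast

lemma not_leqk_if_separated: "leqk c p \<Longrightarrow> smallerk q c \<Longrightarrow> \<not> leqk p q"
  unfolding smallerk_def using leqk_trans leqk_antisym by blast

fun avoids_above_true :: "(nat list \<times> bool) list \<Rightarrow> bool" where
  "avoids_above_true [] = True"
| "avoids_above_true ((p, b) # tr) \<longleftrightarrow>
     (b \<longrightarrow> (\<forall>q\<in>fst ` set tr. \<not> leqk p q)) \<and> avoids_above_true tr"

lemma avoids_above_true_append:
  "avoids_above_true (A @ B) \<longleftrightarrow> avoids_above_true A \<and> avoids_above_true B
     \<and> (\<forall>(p, b)\<in>set A. b \<longrightarrow> (\<forall>q\<in>fst ` set B. \<not> leqk p q))"
  by (induction A rule: avoids_above_true.induct) auto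

lemma avoids_above_true_nth:
  assumes "avoids_above_true tr" "i < j" "j < length tr" "snd (tr ! i)"
  shows "\<not> leqk (fst (tr ! i)) (fst (tr ! j))"
  using assms
proof (induction tr arbitrary: i j rule: avoids_above_true.induct)
  case (2 p b tr)
  show ?case
  proof (cases i)
    case 0
    then have "fst (tr ! (j - 1)) \<in> fst ` set tr" using "2.prems" by simp
    with 0 "2.prems" show ?thesis by auto
  next
    case (Suc i')
    then show ?thesis using "2.IH"[of i' "j - 1"] "2.prems" by (cases j) auto
  qed
qed simp

declare bsearch.simps [simp del]

lemma bsearch_step:
  assumes "1 < hi - lo" "mid = lo + (hi - lo - 1) div 2"
  shows "bsearch f x i lo hi = apsnd ((#) (x[i := mid], f (x[i := mid])))
    (if f (x[i := mid]) then bsearch f (x[i := mid]) i lo (mid + 1)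
     else bsearch f (x[i := mid]) i (mid + 1) hi)"
  using assms by (subst bsearch.simps) (simp add: Let_def split: prod.split)

lemma bsearch_stop: "hi - lo \<le> 1 \<Longrightarrow> bsearch f x i lo hi = (lo, [])"
  by (subst bsearch.simps) simp

lemma bsearch_induct [case_names stop step]:
  fixes f :: "nat list \<Rightarrow> bool" and i :: nat
  assumes "\<And>x lo hi. hi - lo \<le> 1 \<Longrightarrow> P x lo hi"
    and "\<And>x lo hi mid. 1 < hi - lo \<Longrightarrow> mid = lo + (hi - lo - 1) div 2 \<Longrightarrow>
      (f (x[i := mid]) \<Longrightarrow> P (x[i := mid]) lo (mid + 1)) \<Longrightarrow>
      (\<not> f (x[i := mid]) \<Longrightarrow> P (x[i := mid]) (mid + 1) hi) \<Longrightarrow> P x lo hi"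
  shows "P x lo hi"
proof (induction "hi - lo" arbitrary: x lo hi rule: less_induct)
  case less
  show ?case
  proof (cases "1 < hi - lo")
    case True
    define mid where "mid = lo + (hi - lo - 1) div 2"
    have "mid + 1 - lo < hi - lo" "hi - (mid + 1) < hi - lo" using True by (auto simp: mid_def)
    with True show ?thesis by (intro assms(2)[OF _ mid_def] less) auto
  qed (use assms(1) in simp)
qed

lemma bsearch_result_bounds:
  fixes f :: "nat list \<Rightarrow> bool"
  shows "lo < hi \<Longrightarrow> lo \<le> fst (bsearch f x i lo hi) \<and> fst (bsearch f x i lo hi) < hi"
proof (induction x lo hi rule: bsearch_induct[where f = f and i = i])
  case (step x lo hi mid)
  have "lo \<le> mid" "mid + 1 < hi" using step(1,2) by auto
  with step(3,4) show ?case by (cases "f (x[i := mid])") (auto simp: bsearch_step[OF step(1,2)])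
qed (simp add: bsearch_stop)

lemma bsearch_trace_on_line:
  fixes f :: "nat list \<Rightarrow> bool"
  shows "e \<in> set (snd (bsearch f x i lo hi)) \<Longrightarrow> \<exists>v. fst e = x[i := v] \<and> v + 1 < hi"
proof (induction x lo hi rule: bsearch_induct[where f = f and i = i])
  case (step x lo hi mid)
  have "mid + 1 < hi" using step(1,2) by auto
  with step(3-5) show ?case by (cases "f (x[i := mid])") (fastforce simp: bsearch_step[OF step(1,2)])+
qed (simp add: bsearch_stop)

lemma bsearch_result_le_true:
  fixes f :: "nat list \<Rightarrow> bool"
  shows "i < length x \<Longrightarrow> lo < hi \<Longrightarrow> (p, True) \<in> set (snd (bsearch f x i lo hi)) \<Longrightarrow>
    fst (bsearch f x i lo hi) \<le> p ! i"
proof (induction x lo hi rule: bsearch_induct[where f = f and i = i])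
  case (step x lo hi mid)
  have mid: "lo \<le> mid" "mid + 1 < hi" using step(1,2) by auto
  show ?case
  proof (cases "f (x[i := mid])")
    case True
    have "fst (bsearch f (x[i := mid]) i lo (mid + 1)) < mid + 1"
      using bsearch_result_bounds[of lo "mid + 1"] mid by simp
    with True step(3,5-7) mid show ?thesis by (auto simp: bsearch_step[OF step(1,2)])
  next
    case False
    with step(4-7) mid show ?thesis by (auto simp: bsearch_step[OF step(1,2)])
  qed
qed (simp add: bsearch_stop)

lemma avoids_above_true_bsearch:
  fixes f :: "nat list \<Rightarrow> bool"
  shows "i < length x \<Longrightarrow> avoids_above_true (snd (bsearch f x i lo hi))"
proof (induction x lo hi rule: bsearch_induct[where f = f and i = i])
  case (step x lo hi mid)
  show ?case
  proof (cases "f (x[i := mid])")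
    case True
    have "\<not> leqk (x[i := mid]) q" if q: "q \<in> fst ` set (snd (bsearch f (x[i := mid]) i lo (mid + 1)))" for q
    proof -
      obtain v where "q = x[i := v]" "v < mid"
        using q bsearch_trace_on_line[of _ f "x[i := mid]" i lo "mid + 1"] by fastforce
      then show ?thesis using step(5) by (intro nth_less_imp_not_leqk) auto
    qed
    with True step(3,5) show ?thesis by (simp add: bsearch_step[OF step(1,2)])
  next
    case False
    with step(4,5) show ?thesis by (simp add: bsearch_step[OF step(1,2)])
  qed
qed (simp add: bsearch_stop)

lemma spp_aux_Cons_eq:
  "bsearch f x i 0 (x ! i + 1) = (m, tr) \<Longrightarrow>
    spp_aux f x (i # is) = apsnd ((@) tr) (spp_aux f (x[i := m]) is)"
  by (simp split: prod.split)

lemma spp_aux_result_leqk: "leqk (fst (spp_aux f x is)) x"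
proof (induction "is" arbitrary: x)
  case (Cons i "is")
  obtain m tr where b: "bsearch f x i 0 (x ! i + 1) = (m, tr)" by fastforce
  have "m \<le> x ! i" using bsearch_result_bounds[of 0 "x ! i + 1" f x i] b by simp
  then have "leqk (x[i := m]) x" by (rule list_update_leqk)
  with Cons.IH[of "x[i := m]"] show ?case unfolding spp_aux_Cons_eq[OF b] by (auto intro: leqk_trans)
qed (simp add: leqk_refl)

lemma spp_aux_trace_smallerk:
  "set is \<subseteq> {..<length x} \<Longrightarrow> e \<in> set (snd (spp_aux f x is)) \<Longrightarrow> smallerk (fst e) x"
proof (induction "is" arbitrary: x)
  case (Cons i "is")
  obtain m tr where b: "bsearch f x i 0 (x ! i + 1) = (m, tr)" by fastforce
  have "m \<le> x ! i" using bsearch_result_bounds[of 0 "x ! i + 1" f x i] b by simp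
  then have xm: "leqk (x[i := m]) x" by (rule list_update_leqk)
  show ?case
  proof (cases "e \<in> set tr")
    case True
    then obtain v where "fst e = x[i := v]" "v < x ! i"
      using bsearch_trace_on_line[of e f x i 0 "x ! i + 1"] b by fastforce
    with Cons.prems(1) show ?thesis by (simp add: list_update_smallerk)
  next
    case False
    with Cons.prems have "e \<in> set (snd (spp_aux f (x[i := m]) is))"
      unfolding spp_aux_Cons_eq[OF b] by simp
    with Cons.IH[of "x[i := m]"] Cons.prems(1) have "smallerk (fst e) (x[i := m])" by simp
    then show ?thesis using xm by (rule smallerk_leqk_trans)
  qed
qed simp

lemma spp_aux_result_leqk_true:
  "set is \<subseteq> {..<length x} \<Longrightarrow> (p, True) \<in> set (snd (spp_aux f x is)) \<Longrightarrow>
    leqk (fst (spp_aux f x is)) p"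
proof (induction "is" arbitrary: x)
  case (Cons i "is")
  obtain m tr where b: "bsearch f x i 0 (x ! i + 1) = (m, tr)" by fastforce
  show ?case
  proof (cases "(p, True) \<in> set tr")
    case True
    then obtain v where "p = x[i := v]"
      using bsearch_trace_on_line[of "(p, True)" f x i 0 "x ! i + 1"] b by fastforce
    moreover have "m \<le> p ! i"
      using bsearch_result_le_true[of i x 0 "x ! i + 1" p f] Cons.prems True b by simp
    ultimately have "leqk (x[i := m]) p" using Cons.prems(1) by (simp add: leqk_list_update_mono)
    then show ?thesis
      using spp_aux_result_leqk[of f "x[i := m]" "is"] unfolding spp_aux_Cons_eq[OF b]
      by (simp add: leqk_trans)
  next
    case False
    with Cons show ?thesis unfolding spp_aux_Cons_eq[OF b] by simp
  qed
qed simp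

lemma avoids_above_true_spp_aux:
  "set is \<subseteq> {..<length x} \<Longrightarrow> avoids_above_true (snd (spp_aux f x is))"
proof (induction "is" arbitrary: x)
  case (Cons i "is")
  obtain m tr where b: "bsearch f x i 0 (x ! i + 1) = (m, tr)" by fastforce
  have "avoids_above_true tr"
    using avoids_above_true_bsearch[of i x f 0 "x ! i + 1"] Cons.prems b by simp
  moreover have "avoids_above_true (snd (spp_aux f (x[i := m]) is))" using Cons by simp
  moreover have "\<not> leqk p (fst w)"
    if "(p, True) \<in> set tr" "w \<in> set (snd (spp_aux f (x[i := m]) is))" for p w
  proof (rule not_leqk_if_separated)
    obtain v where "p = x[i := v]"
      using bsearch_trace_on_line[of "(p, True)" f x i 0 "x ! i + 1"] b \<open>(p, True) \<in> set tr\<close>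
      by fastforce
    moreover have "m \<le> p ! i"
      using bsearch_result_le_true[of i x 0 "x ! i + 1" p f] Cons.prems that(1) b by simp
    ultimately show "leqk (x[i := m]) p" using Cons.prems by (simp add: leqk_list_update_mono)
    show "smallerk (fst w) (x[i := m])"
      using spp_aux_trace_smallerk[of "is" "x[i := m]" w f] Cons.prems that(2) by simp
  qed
  ultimately show ?case unfolding spp_aux_Cons_eq[OF b] by (auto simp: avoids_above_true_append)
qed simp

lemma maximal_split_set_outside_cones:
  assumes "\<forall>y\<in>S. length y = k \<and> (\<forall>p\<in>P. \<not> leqk p y)" "length x = k"
    and "z \<in> maximal_elems (split_set k x S)"
  shows "length z = k \<and> (\<forall>p\<in>insert x P. \<not> leqk p z)"
proof -
  have "z \<in> split_set k x S" using assms(3) by (simp add: maximal_elems_def)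
  then consider (kept) "z \<in> S" "\<not> leqk x z"
    | (lowered) y i where "z = y[i := x ! i - 1]" "y \<in> S" "leqk x y" "i < k" "0 < x ! i"
    unfolding split_set_def by blast
  then show ?thesis
  proof cases
    case kept
    with assms(1) show ?thesis by auto
  next
    case lowered
    have "length y = k" using lowered(2) assms(1) by simp
    have "x ! i - 1 \<le> y ! i" using lowered(3,4) assms(2) by (auto simp: leqk_def)
    then have "leqk z y" unfolding lowered(1) by (rule list_update_leqk)
    moreover have "\<not> leqk x z"
      using lowered \<open>length y = k\<close> assms(2) by (intro nth_less_imp_not_leqk) auto
    ultimately show ?thesis
      using lowered(1,2) assms(1) \<open>length y = k\<close> by (auto dest: leqk_trans)
  qed
qed

lemma avoids_above_true_append_outside_cones:
  assumes "avoids_above_true tr" "avoids_above_true new"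
    and "\<forall>(q, b)\<in>set tr. b \<longrightarrow> (\<exists>p\<in>P. leqk p q)"
    and "\<forall>w\<in>fst ` set new. \<exists>y. leqk w y \<and> (\<forall>p\<in>P. \<not> leqk p y)"
  shows "avoids_above_true (tr @ new)"
  using assms unfolding avoids_above_true_append by (fastforce dest: leqk_trans)

definition pe_invariant :: "nat \<Rightarrow> pe_state \<Rightarrow> bool" where
  "pe_invariant k = (\<lambda>(S, P, tr).
     (\<forall>y\<in>S. length y = k \<and> (\<forall>p\<in>P. \<not> leqk p y))
     \<and> (\<forall>(q, b)\<in>set tr. b \<longrightarrow> (\<exists>p\<in>P. leqk p q))
     \<and> avoids_above_true tr)"

lemma pe_invariant_init: "pe_invariant k (pe_init N k)"
  by (simp add: pe_invariant_def pe_init_def)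

lemma pe_step_preserves_invariant:
  assumes "pe_step N k f st st'" "pe_invariant k st"
  shows "pe_invariant k st'"
  using assms
proof induction
  case (feasible_pick x S x' tr1 P tr)
  have S: "\<forall>y\<in>S. length y = k \<and> (\<forall>p\<in>P. \<not> leqk p y)"
    and T: "\<forall>(q, b)\<in>set tr. b \<longrightarrow> (\<exists>p\<in>P. leqk p q)" "avoids_above_true tr"
    using feasible_pick.prems by (auto simp: pe_invariant_def)
  have idx: "set [0..<length x] \<subseteq> {..<length x}" by auto
  have x'x: "leqk x' x"
    using spp_aux_result_leqk[of f x "[0..<length x]"] feasible_pick.hyps(3)
    by (simp add: search_pareto_point_def)
  have below: "smallerk (fst w) x" if "w \<in> set tr1" for w
    using spp_aux_trace_smallerk[OF idx, of w f] feasible_pick.hyps(3) that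
    by (simp add: search_pareto_point_def)
  have above: "leqk x' p" if "(p, True) \<in> set tr1" for p
    using spp_aux_result_leqk_true[OF idx, of p f] feasible_pick.hyps(3) that
    by (simp add: search_pareto_point_def)
  have "avoids_above_true tr1"
    using avoids_above_true_spp_aux[OF idx, of f] feasible_pick.hyps(3)
    by (simp add: search_pareto_point_def)
  moreover have "\<forall>q\<in>fst ` set tr1. \<not> leqk x q"
    using below not_leqk_if_separated[OF leqk_refl] by fastforce
  ultimately have new: "avoids_above_true ([(x, True)] @ tr1)" by simp
  have "\<forall>w\<in>fst ` set ([(x, True)] @ tr1). leqk w x"
    using below by (auto simp: smallerk_def leqk_refl)
  then have "avoids_above_true (tr @ [(x, True)] @ tr1)"
    using avoids_above_true_append_outside_cones[OF T(2) new T(1)] S feasible_pick.hyps(1) by blast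
  moreover have "\<forall>(q, b)\<in>set (tr @ [(x, True)] @ tr1). b \<longrightarrow> (\<exists>p\<in>insert x' P. leqk p q)"
    using T(1) x'x above by auto
  moreover have "length x' = k"
    using x'x S feasible_pick.hyps(1) by (simp add: leqk_def)
  note maximal_split_set_outside_cones[OF S this]
  ultimately show ?case unfolding pe_invariant_def by blast
next
  case (infeasible_pick x S P tr)
  then show ?case
    using avoids_above_true_append_outside_cones[of tr "[(x, False)]" P]
    by (auto simp: pe_invariant_def intro: leqk_refl)
qed

theorem lemma4:
  fixes N k :: nat and f :: "nat list \<Rightarrow> bool"
    and S P :: "nat list set" and tr :: "(nat list \<times> bool) list"
  assumes "k \<ge> 1"
    and "feasible N k f"
    and "(pe_step N k f)\<^sup>*\<^sup>* (pe_init N k) (S, P, tr)"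
    and "i < j" and "j < length tr"
    and "snd (tr ! i)"
  shows "\<not> leqk (fst (tr ! i)) (fst (tr ! j))"
proof -
  have "pe_invariant k (S, P, tr)"
    using assms(3) by (induction rule: rtranclp_induct)
      (auto intro: pe_invariant_init pe_step_preserves_invariant)
  then have "avoids_above_true tr" by (simp add: pe_invariant_def)
  then show ?thesis using assms(4-6) by (rule avoids_above_true_nth)
qed

end
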